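(* Let $G$ and $G'$ be finitely generated groups, and suppose that one of the following holds: (i) $G$ is a subgroup of $G'$; (ii) $G$ is a quotient of $G'$ (there is a surjective homomorphism $G'\to G$); (iii) $G'$ is the quotient of $G$ by a finite normal subgroup (there is a surjective homomorphism $G\to G'$ with finite kernel). If $G$ has exponential Nielsen growth, then $G'$ has exponential Nielsen growth.
   Context: For a group $G$, a generating $n$-tuple is $(g_1,\dots,g_n)\in G^n$ with $G=\langle g_1,\dots,g_n\rangle$. The product replacement graph $\Gamma_n(G)$ has vertices the generating $n$-tuples, with edges from $(g_1,\dots,g_n)$ to each tuple obtained by replacing $g_j$ by $g_jg_i^{\pm1}$ or $g_i^{\pm1}g_j$, for every ordered pair $i\neq j$. For $S\in\Gamma_n(G)$, $\Gamma_n(G,S)$ is the connected component of $\Gamma_n(G)$ containing $S$. A connected graph has exponential growth if for some vertex $v$ there is $\alpha>1$ such that the number of vertices at distance at most $r$ from $v$ is at least $\alpha^r$ for all sufficiently large $r$. $G$ has exponential Nielsen growth if $\Gamma_n(G,S)$ has exponential growth for some $n$ and some generating $n$-tuple $S$. *)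

theory Defs
  imports "HOL-Algebra.Algebra"
begin

definition fin_gen :: "('a, 'b) monoid_scheme \<Rightarrow> bool" where
  "fin_gen G \<longleftrightarrow> (\<exists>A. finite A \<and> A \<subseteq> carrier G \<and> generate G A = carrier G)"

definition gen_tuple :: "('a, 'b) monoid_scheme \<Rightarrow> nat \<Rightarrow> 'a list \<Rightarrow> bool" where
  "gen_tuple G n xs \<longleftrightarrow> length xs = n \<and> set xs \<subseteq> carrier G \<and> generate G (set xs) = carrier G"

definition pr_move :: "('a, 'b) monoid_scheme \<Rightarrow> nat \<Rightarrow> 'a list \<Rightarrow> 'a list \<Rightarrow> bool" where
  "pr_move G n xs ys \<longleftrightarrow> (\<exists>i<n. \<exists>j<n. i \<noteq> j \<and>
      (ys = xs[j := xs ! j \<otimes>\<^bsub>G\<^esub> xs ! i] \<or>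
       ys = xs[j := xs ! j \<otimes>\<^bsub>G\<^esub> inv\<^bsub>G\<^esub> (xs ! i)] \<or>
       ys = xs[j := xs ! i \<otimes>\<^bsub>G\<^esub> xs ! j] \<or>
       ys = xs[j := inv\<^bsub>G\<^esub> (xs ! i) \<otimes>\<^bsub>G\<^esub> xs ! j]))"

definition pr_edge :: "('a, 'b) monoid_scheme \<Rightarrow> nat \<Rightarrow> 'a list \<Rightarrow> 'a list \<Rightarrow> bool" where
  "pr_edge G n xs ys \<longleftrightarrow> gen_tuple G n xs \<and> gen_tuple G n ys \<and> pr_move G n xs ys"

definition pr_component :: "('a, 'b) monoid_scheme \<Rightarrow> nat \<Rightarrow> 'a list \<Rightarrow> 'a list set" where
  "pr_component G n S = {T. (pr_edge G n)\<^sup>*\<^sup>* S T}"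

definition pr_ball :: "('a, 'b) monoid_scheme \<Rightarrow> nat \<Rightarrow> 'a list \<Rightarrow> nat \<Rightarrow> 'a list set" where
  "pr_ball G n v r = {w. \<exists>k\<le>r. (pr_edge G n ^^ k) v w}"

definition pr_exp_growth :: "('a, 'b) monoid_scheme \<Rightarrow> nat \<Rightarrow> 'a list \<Rightarrow> bool" where
  "pr_exp_growth G n S \<longleftrightarrow> (\<exists>v \<in> pr_component G n S. \<exists>\<alpha>::real. \<alpha> > 1 \<and>
      (\<exists>R. \<forall>r\<ge>R. real (card (pr_ball G n v r)) \<ge> \<alpha> ^ r))"

definition exp_nielsen_growth :: "('a, 'b) monoid_scheme \<Rightarrow> bool" where
  "exp_nielsen_growth G \<longleftrightarrow> (\<exists>n S. gen_tuple G n S \<and> pr_exp_growth G n S)"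

end

theory Submission
  imports Defs
begin

text \<open>
  Each hypothesis gives a way to pass from generating tuples of \<open>G\<close> to generating tuples of
  \<open>G'\<close> that is compatible with Nielsen moves, and under which the ball of radius \<open>r\<close> in
  \<open>\<Gamma>\<^sub>n(G)\<close> is at most a constant times a ball of radius \<open>r\<close> in a product replacement graph
  of \<open>G'\<close>; a constant factor does not destroy exponential growth.  For a subgroup,
  \<open>S \<mapsto> h(S) T\<close> with \<open>T\<close> a fixed generating tuple of \<open>G'\<close> is an injective graph map.  For
  a surjection \<open>G' \<rightarrow> G\<close>, Nielsen moves lift along it, so every ball of \<open>\<Gamma>\<^sub>n(G)\<close> is the
  image of a ball around a lift of its centre padded with \<open>T\<close>.  For a surjection \<open>G \<rightarrow> G'\<close>
  with kernel of order \<open>K\<close>, \<open>S \<mapsto> h(S)\<close> is a graph map whose fibres have at most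
  \<open>(nK)\<^sup>n\<close> elements.
\<close>

lemma relpowp_image:
  assumes "\<And>x y. R x y \<Longrightarrow> S (f x) (f y)" and "(R ^^ k) x y"
  shows "(S ^^ k) (f x) (f y)"
  using assms(2)
proof (induction k arbitrary: y)
  case (Suc k)
  then obtain z where "(R ^^ k) x z" "R z y" by auto
  then show ?case using Suc.IH assms(1) by auto
qed simp

lemma relpowp_lift:
  assumes lift: "\<And>x' y. x' \<in> D \<Longrightarrow> R (p x') y \<Longrightarrow> \<exists>y'\<in>D. S x' y' \<and> p y' = y"
    and "(R ^^ k) (p u) y" and "u \<in> D"
  shows "\<exists>y'\<in>D. (S ^^ k) u y' \<and> p y' = y"
  using assms(2)
proof (induction k arbitrary: y)
  case 0
  then show ?case using \<open>u \<in> D\<close> by auto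
next
  case (Suc k)
  then obtain x where "(R ^^ k) (p u) x" "R x y" by auto
  then obtain x' where "x' \<in> D" "(S ^^ k) u x'" "p x' = x" using Suc.IH by blast
  then obtain y' where "y' \<in> D" "S x' y'" "p y' = y" using lift \<open>R x y\<close> by blast
  then show ?case using \<open>(S ^^ k) u x'\<close> by auto
qed

lemma finite_relpowp_ball:
  fixes R :: "'a \<Rightarrow> 'a \<Rightarrow> bool"
  assumes "\<And>x. finite {y. R x y}"
  shows "finite {w. \<exists>k\<le>r. (R ^^ k) v w}"
proof (induction r)
  case 0
  have "{w. (R ^^ 0) v w} = {v}"
    by (auto intro: relpowp_0_I elim: relpowp_0_E)
  then show ?case by simp
next
  case (Suc r)
  have "{w. \<exists>k\<le>Suc r. (R ^^ k) v w} \<subseteq>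
      {w. \<exists>k\<le>r. (R ^^ k) v w} \<union> (\<Union>x\<in>{w. \<exists>k\<le>r. (R ^^ k) v w}. {y. R x y})"
    by (fastforce simp: le_Suc_eq)
  then show ?case
    using Suc assms by (meson finite_UN_I finite_Un finite_subset)
qed

lemma exp_lower_bound_dominated:
  fixes f g :: "nat \<Rightarrow> real"
  assumes "\<alpha> > 1" and "\<forall>r\<ge>R. \<alpha> ^ r \<le> f r" and "\<And>r. f r \<le> C * g r" and "\<And>r. 0 \<le> g r"
  shows "\<exists>\<beta>>1. \<exists>R'. \<forall>r\<ge>R'. \<beta> ^ r \<le> g r"
proof -
  define \<beta> where "\<beta> = sqrt \<alpha>"
  have \<beta>: "\<beta> > 1" using assms(1) by (simp add: \<beta>_def)
  obtain N where N: "C < \<beta> ^ N" using real_arch_pow[OF \<beta>] by blast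
  have "\<beta> ^ r \<le> g r" if r: "max R N \<le> r" for r
  proof -
    have "\<beta> ^ r * \<beta> ^ r = \<alpha> ^ r"
      using assms(1) by (simp add: \<beta>_def flip: power_mult_distrib)
    also have "\<dots> \<le> C * g r" using assms(2,3) r by (meson max.boundedE order.trans)
    also have "\<dots> \<le> \<beta> ^ r * g r"
    proof (rule mult_right_mono)
      show "C \<le> \<beta> ^ r"
        using N power_increasing[of N r \<beta>] \<beta> r by linarith
    qed (rule assms(4))
    finally show ?thesis using \<beta> by simp
  qed
  then show ?thesis using \<beta> by blast
qed

definition nielsen_moves :: "('a, 'b) monoid_scheme \<Rightarrow> 'a list \<Rightarrow> nat \<Rightarrow> nat \<Rightarrow> 'a list set" where
  "nielsen_moves G xs i j =
    {xs[j := xs ! j \<otimes>\<^bsub>G\<^esub> xs ! i], xs[j := xs ! j \<otimes>\<^bsub>G\<^esub> inv\<^bsub>G\<^esub> (xs ! i)],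
     xs[j := xs ! i \<otimes>\<^bsub>G\<^esub> xs ! j], xs[j := inv\<^bsub>G\<^esub> (xs ! i) \<otimes>\<^bsub>G\<^esub> xs ! j]}"

lemma pr_move_iff_nielsen_moves:
  "pr_move G n xs ys \<longleftrightarrow> (\<exists>i<n. \<exists>j<n. i \<noteq> j \<and> ys \<in> nielsen_moves G xs i j)"
  unfolding pr_move_def nielsen_moves_def by blast

lemma map_nielsen_moves:
  assumes "group_hom A B \<phi>" and "set xs \<subseteq> carrier A" and "i < length xs" and "j < length xs"
  shows "map \<phi> ` nielsen_moves A xs i j = nielsen_moves B (map \<phi> xs) i j"
proof -
  interpret group_hom A B \<phi> by fact
  have "xs ! i \<in> carrier A" "xs ! j \<in> carrier A"
    using assms(2-4) nth_mem by blast+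
  then show ?thesis
    using assms(3,4) by (simp add: nielsen_moves_def map_update)
qed

lemma append_nielsen_moves:
  assumes "i < length xs" and "j < length xs"
  shows "(\<lambda>ys. ys @ T) ` nielsen_moves A xs i j = nielsen_moves A (xs @ T) i j"
  using assms by (simp add: nielsen_moves_def list_update_append1 nth_append)

lemma nielsen_moves_closed:
  assumes "group A" and "set xs \<subseteq> carrier A" and "i < length xs" and "j < length xs"
    and "ys \<in> nielsen_moves A xs i j"
  shows "set ys \<subseteq> carrier A \<and> length ys = length xs"
proof -
  interpret group A by fact
  have "xs ! i \<in> carrier A" "xs ! j \<in> carrier A"
    using assms(2-4) nth_mem by blast+
  then show ?thesis
    using assms(2,5) set_update_subset_insert by (fastforce simp: nielsen_moves_def)
qed

lemma pr_move_map:
  assumes "group_hom A B \<phi>" and "set xs \<subseteq> carrier A" and "length xs = n"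
    and "pr_move A n xs ys"
  shows "pr_move B n (map \<phi> xs) (map \<phi> ys)"
  using assms map_nielsen_moves[OF assms(1,2)] unfolding pr_move_iff_nielsen_moves by blast

lemma pr_move_lift:
  assumes "group_hom A B \<phi>" and "set xs \<subseteq> carrier A" and "length xs = n"
    and "pr_move B n (map \<phi> xs) zs"
  shows "\<exists>ys. pr_move A n xs ys \<and> map \<phi> ys = zs"
proof -
  obtain i j where ij: "i < n" "j < n" "i \<noteq> j" and "zs \<in> nielsen_moves B (map \<phi> xs) i j"
    using assms(4) unfolding pr_move_iff_nielsen_moves by blast
  then have "zs \<in> map \<phi> ` nielsen_moves A xs i j"
    using map_nielsen_moves[OF assms(1,2)] assms(3) by simp
  then show ?thesis
    using ij unfolding pr_move_iff_nielsen_moves by blast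
qed

lemma pr_move_closed:
  assumes "group A" and "set xs \<subseteq> carrier A" and "length xs = n" and "pr_move A n xs ys"
  shows "set ys \<subseteq> carrier A \<and> length ys = n"
  using assms nielsen_moves_closed[OF assms(1,2)] unfolding pr_move_iff_nielsen_moves by metis

lemma pr_move_append:
  assumes "length xs = n" and "pr_move A n xs ys"
  shows "pr_move A (n + m) (xs @ zs) (ys @ zs)"
proof -
  obtain i j where ij: "i < n" "j < n" "i \<noteq> j" and "ys \<in> nielsen_moves A xs i j"
    using assms(2) unfolding pr_move_iff_nielsen_moves by blast
  then have "ys @ zs \<in> nielsen_moves A (xs @ zs) i j"
    using append_nielsen_moves[of i xs j zs A] assms(1) by blast
  then show ?thesis
    using ij unfolding pr_move_iff_nielsen_moves by (meson trans_less_add1)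
qed

lemma finite_pr_move_successors: "finite {ys. pr_move G n xs ys}"
proof (rule finite_subset)
  show "{ys. pr_move G n xs ys} \<subseteq> (\<Union>i<n. \<Union>j<n. nielsen_moves G xs i j)"
    unfolding pr_move_iff_nielsen_moves by blast
qed (simp add: nielsen_moves_def)

lemma gen_tuple_map_surj:
  assumes "group_hom A B \<phi>" and "\<phi> ` carrier A = carrier B" and "gen_tuple A n xs"
  shows "gen_tuple B n (map \<phi> xs)"
proof -
  interpret group_hom A B \<phi> by fact
  have xs: "set xs \<subseteq> carrier A" using assms(3) unfolding gen_tuple_def by simp
  have "generate B (set (map \<phi> xs)) = \<phi> ` generate A (set xs)"
    using generate_img[OF xs] by simp
  also have "\<dots> = carrier B" using assms(2,3) unfolding gen_tuple_def by simp
  finally show ?thesis using assms(3) xs unfolding gen_tuple_def by auto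
qed

lemma gen_tuple_append:
  assumes "group B" and "set xs \<subseteq> carrier B" and "gen_tuple B m ys"
  shows "gen_tuple B (length xs + m) (xs @ ys)"
proof -
  interpret group B by fact
  have ys: "set ys \<subseteq> carrier B" using assms(3) unfolding gen_tuple_def by simp
  have "carrier B = generate B (set ys)" using assms(3) unfolding gen_tuple_def by simp
  also have "\<dots> \<subseteq> generate B (set (xs @ ys))" by (rule mono_generate) auto
  finally have "carrier B \<subseteq> generate B (set (xs @ ys))" .
  moreover have "generate B (set (xs @ ys)) \<subseteq> carrier B"
    using assms(2) ys by (intro generate_incl) auto
  ultimately show ?thesis using assms(2,3) ys unfolding gen_tuple_def by auto
qed

lemma gen_tuple_map_append:
  assumes "group_hom G G' h" and "gen_tuple G' m T" and "gen_tuple G n x"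
  shows "gen_tuple G' (n + m) (map h x @ T)"
proof -
  interpret group_hom G G' h by fact
  have "set (map h x) \<subseteq> carrier G'"
    using assms(3) by (auto simp: gen_tuple_def)
  then show ?thesis
    using gen_tuple_append[OF H.is_group _ assms(2)] assms(3) by (simp add: gen_tuple_def del: set_map)
qed

lemma fin_gen_imp_gen_tuple:
  assumes "fin_gen G"
  obtains ys where "gen_tuple G (length ys) ys"
proof -
  obtain A where "finite A" "A \<subseteq> carrier G" "generate G A = carrier G"
    using assms unfolding fin_gen_def by blast
  moreover obtain ys where "set ys = A" using finite_list[OF \<open>finite A\<close>] by blast
  ultimately show ?thesis using that unfolding gen_tuple_def by auto
qed

lemma pr_edge_map_append:
  assumes "group_hom G G' h" and "gen_tuple G' m T" and "pr_edge G n x y"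
  shows "pr_edge G' (n + m) (map h x @ T) (map h y @ T)"
proof -
  have x: "set x \<subseteq> carrier G" "length x = n"
    using assms(3) by (simp_all add: pr_edge_def gen_tuple_def)
  have "pr_move G n x y"
    using assms(3) by (simp add: pr_edge_def)
  then have "pr_move G' n (map h x) (map h y)"
    by (rule pr_move_map[OF assms(1) x])
  then have "pr_move G' (n + m) (map h x @ T) (map h y @ T)"
    using x(2) by (intro pr_move_append) simp_all
  moreover have "gen_tuple G n x" "gen_tuple G n y"
    using assms(3) by (simp_all add: pr_edge_def)
  ultimately show ?thesis
    using gen_tuple_map_append[OF assms(1,2)] by (simp add: pr_edge_def)
qed

lemma pr_edge_lift_append:
  assumes "group_hom G' G h" and "gen_tuple G' m T"
    and "set w \<subseteq> carrier G'" and "length w = n" and "pr_edge G n (map h w) y"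
  obtains w' where "set w' \<subseteq> carrier G'" and "length w' = n" and "map h w' = y"
    and "pr_edge G' (n + m) (w @ T) (w' @ T)"
proof -
  interpret group_hom G' G h by fact
  have "pr_move G n (map h w) y"
    using assms(5) by (simp add: pr_edge_def)
  then obtain w' where w': "pr_move G' n w w'" "map h w' = y"
    using pr_move_lift[OF assms(1,3,4)] by blast
  have closed: "set w' \<subseteq> carrier G'" "length w' = n"
    using pr_move_closed[OF G.is_group assms(3,4) w'(1)] by simp_all
  have "gen_tuple G' (n + m) (w @ T)" "gen_tuple G' (n + m) (w' @ T)"
    using gen_tuple_append[OF G.is_group _ assms(2)] assms(3,4) closed by force+
  then have "pr_edge G' (n + m) (w @ T) (w' @ T)"
    using pr_move_append[OF assms(4) w'(1)] by (simp add: pr_edge_def)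
  then show ?thesis
    using that closed w'(2) by blast
qed

lemma pr_edge_map_surj:
  assumes "group_hom G G' h" and "h ` carrier G = carrier G'" and "pr_edge G n x y"
  shows "pr_edge G' n (map h x) (map h y)"
proof -
  have x: "set x \<subseteq> carrier G" "length x = n"
    using assms(3) by (simp_all add: pr_edge_def gen_tuple_def)
  have "pr_move G n x y"
    using assms(3) by (simp add: pr_edge_def)
  then have "pr_move G' n (map h x) (map h y)"
    by (rule pr_move_map[OF assms(1) x])
  moreover have "gen_tuple G n x" "gen_tuple G n y"
    using assms(3) by (simp_all add: pr_edge_def)
  ultimately show ?thesis
    using gen_tuple_map_surj[OF assms(1,2)] by (simp add: pr_edge_def)
qed

lemma finite_pr_ball: "finite (pr_ball G n v r)"
  unfolding pr_ball_def
proof (rule finite_relpowp_ball)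
  fix x
  have "{y. pr_edge G n x y} \<subseteq> {y. pr_move G n x y}"
    by (auto simp: pr_edge_def)
  then show "finite {y. pr_edge G n x y}"
    using finite_pr_move_successors by (rule finite_subset)
qed

lemma pr_ball_image_subset:
  assumes "\<And>x y. pr_edge G n x y \<Longrightarrow> pr_edge G' m (f x) (f y)"
  shows "f ` pr_ball G n v r \<subseteq> pr_ball G' m (f v) r"
proof
  fix w assume "w \<in> f ` pr_ball G n v r"
  then obtain x k where "k \<le> r" "(pr_edge G n ^^ k) v x" "w = f x"
    by (auto simp: pr_ball_def)
  moreover have "(pr_edge G' m ^^ k) (f v) (f x)"
    using relpowp_image[of "pr_edge G n" "pr_edge G' m" f, OF assms \<open>(pr_edge G n ^^ k) v x\<close>] .
  ultimately show "w \<in> pr_ball G' m (f v) r"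
    unfolding pr_ball_def by blast
qed

lemma pr_ball_subset_image_lift:
  assumes "\<And>x' y. x' \<in> D \<Longrightarrow> pr_edge G n (p x') y \<Longrightarrow> \<exists>y'\<in>D. pr_edge G' m x' y' \<and> p y' = y"
    and "u \<in> D"
  shows "pr_ball G n (p u) r \<subseteq> p ` pr_ball G' m u r"
proof
  fix y assume "y \<in> pr_ball G n (p u) r"
  then obtain k where k: "k \<le> r" "(pr_edge G n ^^ k) (p u) y"
    by (auto simp: pr_ball_def)
  then obtain y' where "(pr_edge G' m ^^ k) u y'" "p y' = y"
    using relpowp_lift[where R = "pr_edge G n" and S = "pr_edge G' m", OF assms(1) k(2) assms(2)]
    by blast
  then have "y' \<in> pr_ball G' m u r" and "p y' = y"
    using k(1) unfolding pr_ball_def by blast+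
  then show "y \<in> p ` pr_ball G' m u r"
    by blast
qed

lemma pr_ball_subset_image_lift_append:
  assumes "group_hom G' G h" and "gen_tuple G' m T" and "set w \<subseteq> carrier G'" and "length w = n"
  shows "pr_ball G n (map h w) r \<subseteq> (\<lambda>x. map h (take n x)) ` pr_ball G' (n + m) (w @ T) r"
proof -
  define D where "D = {w @ T | w. set w \<subseteq> carrier G' \<and> length w = n}"
  define p where "p = (\<lambda>x. map h (take n x))"
  have lift: "\<exists>y'\<in>D. pr_edge G' (n + m) x' y' \<and> p y' = y"
    if x': "x' \<in> D" and edge: "pr_edge G n (p x') y" for x' y
  proof -
    obtain u where u: "x' = u @ T" "set u \<subseteq> carrier G'" "length u = n"
      using x' unfolding D_def by blast
    have "pr_edge G n (map h u) y"
      using edge u unfolding p_def by simp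
    then obtain u' where u': "set u' \<subseteq> carrier G'" "length u' = n" "map h u' = y"
      "pr_edge G' (n + m) (u @ T) (u' @ T)"
      using pr_edge_lift_append[OF assms(1,2) u(2,3)] by blast
    have "u' @ T \<in> D"
      using u'(1,2) unfolding D_def by blast
    moreover have "p (u' @ T) = y"
      using u'(2,3) by (simp add: p_def)
    ultimately show ?thesis
      using u'(4) u(1) by blast
  qed
  have "w @ T \<in> D" and "p (w @ T) = map h w"
    using assms(3,4) unfolding D_def p_def by auto
  from pr_ball_subset_image_lift[where G = G and n = n and p = p, OF lift this(1), unfolded this(2)]
  show ?thesis
    by (simp only: p_def)
qed

lemma gen_tuple_rtranclp_pr_edge:
  "(pr_edge G n)\<^sup>*\<^sup>* S T \<Longrightarrow> gen_tuple G n S \<Longrightarrow> gen_tuple G n T"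
  by (induction rule: rtranclp_induct) (auto simp: pr_edge_def)

lemma gen_tuple_pr_ball: "gen_tuple G n v \<Longrightarrow> w \<in> pr_ball G n v r \<Longrightarrow> gen_tuple G n w"
  unfolding pr_ball_def using gen_tuple_rtranclp_pr_edge relpowp_imp_rtranclp by fastforce

lemma card_le_mult_card_image:
  assumes "finite B" and "f ` A \<subseteq> B" and "\<And>y. y \<in> B \<Longrightarrow> card {x \<in> A. f x = y} \<le> c"
  shows "card A \<le> c * card B"
proof -
  have "A = (\<Union>y\<in>B. {x \<in> A. f x = y})" using assms(2) by auto
  then have "card A \<le> (\<Sum>y\<in>B. card {x \<in> A. f x = y})"
    using card_UN_le[OF assms(1)] by metis
  also have "\<dots> \<le> (\<Sum>y\<in>B. c)" using assms(3) by (rule sum_mono)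
  finally show ?thesis by (simp add: mult.commute)
qed

text \<open>A nonempty fibre of a group homomorphism is a coset of the kernel.\<close>
lemma card_hom_fibre_le:
  assumes "group_hom A B \<phi>" and "finite (kernel A B \<phi>)"
  shows "finite {x \<in> carrier A. \<phi> x = z} \<and> card {x \<in> carrier A. \<phi> x = z} \<le> card (kernel A B \<phi>)"
proof (cases "\<exists>x0 \<in> carrier A. \<phi> x0 = z")
  case True
  interpret group_hom A B \<phi> by fact
  obtain x0 where x0: "x0 \<in> carrier A" "\<phi> x0 = z" using True by blast
  let ?f = "\<lambda>x. inv\<^bsub>A\<^esub> x0 \<otimes>\<^bsub>A\<^esub> x"
  have inj: "inj_on ?f {x \<in> carrier A. \<phi> x = z}"
    by (rule inj_onI) (use x0 in \<open>auto dest: G.l_cancel[rotated]\<close>)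
  have sub: "?f ` {x \<in> carrier A. \<phi> x = z} \<subseteq> kernel A B \<phi>"
    using x0 unfolding kernel_def by auto
  show ?thesis
    using finite_imageD[OF finite_subset[OF sub assms(2)] inj] card_inj_on_le[OF inj sub assms(2)]
    by blast
next
  case False
  then have empty: "{x \<in> carrier A. \<phi> x = z} = {}" by blast
  show ?thesis unfolding empty by simp
qed

lemma card_hom_preimage_le:
  assumes "group_hom A B \<phi>" and "finite (kernel A B \<phi>)" and "finite Y"
  shows "finite {x \<in> carrier A. \<phi> x \<in> Y} \<and>
    card {x \<in> carrier A. \<phi> x \<in> Y} \<le> card (kernel A B \<phi>) * card Y"
proof
  have "{x \<in> carrier A. \<phi> x \<in> Y} = (\<Union>z\<in>Y. {x \<in> carrier A. \<phi> x = z})" by auto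
  then show "finite {x \<in> carrier A. \<phi> x \<in> Y}"
    using card_hom_fibre_le[OF assms(1,2)] assms(3) by auto
  have "{x \<in> {x \<in> carrier A. \<phi> x \<in> Y}. \<phi> x = z} = {x \<in> carrier A. \<phi> x = z}" if "z \<in> Y" for z
    using that by auto
  then show "card {x \<in> carrier A. \<phi> x \<in> Y} \<le> card (kernel A B \<phi>) * card Y"
    using card_hom_fibre_le[OF assms(1,2)] by (intro card_le_mult_card_image[OF assms(3)]) auto
qed

lemma card_hom_list_fibre_le:
  assumes "group_hom A B \<phi>" and "finite (kernel A B \<phi>)" and "length y = n"
  shows "finite {x. set x \<subseteq> carrier A \<and> length x = n \<and> map \<phi> x = y} \<and>
    card {x. set x \<subseteq> carrier A \<and> length x = n \<and> map \<phi> x = y} \<le> (card (kernel A B \<phi>) * n) ^ n"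
proof
  let ?K = "card (kernel A B \<phi>)" and ?P = "{x \<in> carrier A. \<phi> x \<in> set y}"
  have P: "finite ?P" "card ?P \<le> ?K * card (set y)"
    using card_hom_preimage_le[OF assms(1,2), of "set y"] by simp_all
  moreover have "card (set y) \<le> n"
    using card_length[of y] assms(3) by simp
  ultimately have "card ?P \<le> ?K * n"
    by (meson mult_le_mono2 order.trans)
  have sub: "{x. set x \<subseteq> carrier A \<and> length x = n \<and> map \<phi> x = y} \<subseteq> {x. set x \<subseteq> ?P \<and> length x = n}"
    by auto
  then show "finite {x. set x \<subseteq> carrier A \<and> length x = n \<and> map \<phi> x = y}"
    using finite_lists_length_eq[OF P(1)] by (rule finite_subset)
  from sub have "card {x. set x \<subseteq> carrier A \<and> length x = n \<and> map \<phi> x = y} \<le> card ?P ^ n"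
    using card_mono[OF finite_lists_length_eq[OF P(1)]] card_lists_length_eq[OF P(1)] by simp
  also have "\<dots> \<le> (?K * n) ^ n"
    using \<open>card ?P \<le> ?K * n\<close> by (rule power_mono) simp
  finally show "card {x. set x \<subseteq> carrier A \<and> length x = n \<and> map \<phi> x = y} \<le> (?K * n) ^ n" .
qed

lemma exp_nielsen_growthE:
  assumes "exp_nielsen_growth G"
  obtains n v \<alpha> R where "gen_tuple G n v" and "\<alpha> > 1"
    and "\<forall>r\<ge>R. \<alpha> ^ r \<le> real (card (pr_ball G n v r))"
proof -
  obtain n S v \<alpha> R where "gen_tuple G n S" "v \<in> pr_component G n S" "\<alpha> > 1"
    "\<forall>r\<ge>R. \<alpha> ^ r \<le> real (card (pr_ball G n v r))"
    using assms unfolding exp_nielsen_growth_def pr_exp_growth_def by blast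
  then show ?thesis
    using that gen_tuple_rtranclp_pr_edge unfolding pr_component_def by blast
qed

lemma exp_nielsen_growthI_dominating:
  assumes "gen_tuple G' m u" and "\<alpha> > 1" and "\<forall>r\<ge>R. \<alpha> ^ r \<le> real (card (pr_ball G n v r))"
    and "\<And>r. card (pr_ball G n v r) \<le> c * card (pr_ball G' m u r)"
  shows "exp_nielsen_growth G'"
proof -
  have "real (card (pr_ball G n v r)) \<le> real c * real (card (pr_ball G' m u r))" for r
    using assms(4)[of r] by (simp flip: of_nat_mult)
  then have "\<exists>\<beta>>1. \<exists>R'. \<forall>r\<ge>R'. \<beta> ^ r \<le> real (card (pr_ball G' m u r))"
    by (intro exp_lower_bound_dominated[OF assms(2,3)]) simp_all
  moreover have "u \<in> pr_component G' m u" unfolding pr_component_def by simp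
  ultimately show ?thesis
    using assms(1) unfolding exp_nielsen_growth_def pr_exp_growth_def by blast
qed

lemma exp_nielsen_growth_injective_hom:
  assumes "group G" and "group G'" and "fin_gen G'"
    and "h \<in> hom G G'" and "inj_on h (carrier G)" and "exp_nielsen_growth G"
  shows "exp_nielsen_growth G'"
proof -
  obtain n v \<alpha> R where v: "gen_tuple G n v"
    and growth: "\<alpha> > 1" "\<forall>r\<ge>R. \<alpha> ^ r \<le> real (card (pr_ball G n v r))"
    using assms(6) by (rule exp_nielsen_growthE)
  obtain T where T: "gen_tuple G' (length T) T"
    using assms(3) by (rule fin_gen_imp_gen_tuple)
  have hom: "group_hom G G' h"
    using assms(1,2,4) by (simp add: group_hom_def group_hom_axioms_def)
  define f where "f x = map h x @ T" for x
  have "inj_on f (lists (carrier G))"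
    unfolding f_def using inj_on_map_lists[OF assms(5)] by (simp add: inj_on_def)
  moreover have "pr_ball G n v r \<subseteq> lists (carrier G)" for r
    using gen_tuple_pr_ball[OF v] unfolding gen_tuple_def by blast
  ultimately have inj: "inj_on f (pr_ball G n v r)" for r
    by (rule inj_on_subset)
  have image: "f ` pr_ball G n v r \<subseteq> pr_ball G' (n + length T) (f v) r" for r
    unfolding f_def using pr_edge_map_append[OF hom T] by (rule pr_ball_image_subset)
  show ?thesis
  proof (rule exp_nielsen_growthI_dominating[where c = 1, OF _ growth])
    show "gen_tuple G' (n + length T) (f v)"
      unfolding f_def using hom T v by (rule gen_tuple_map_append)
    show "card (pr_ball G n v r) \<le> 1 * card (pr_ball G' (n + length T) (f v) r)" for r
      using card_inj_on_le[OF inj image finite_pr_ball] by simp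
  qed
qed

lemma exp_nielsen_growth_lift_surjective_hom:
  assumes "group G" and "group G'" and "fin_gen G'"
    and "h \<in> hom G' G" and "h ` carrier G' = carrier G" and "exp_nielsen_growth G"
  shows "exp_nielsen_growth G'"
proof -
  obtain n v \<alpha> R where v: "gen_tuple G n v"
    and growth: "\<alpha> > 1" "\<forall>r\<ge>R. \<alpha> ^ r \<le> real (card (pr_ball G n v r))"
    using assms(6) by (rule exp_nielsen_growthE)
  obtain T where T: "gen_tuple G' (length T) T"
    using assms(3) by (rule fin_gen_imp_gen_tuple)
  have hom: "group_hom G' G h"
    using assms(1,2,4) by (simp add: group_hom_def group_hom_axioms_def)
  have "v \<in> lists (h ` carrier G')"
    using v assms(5) by (auto simp: gen_tuple_def)
  then obtain w where w: "set w \<subseteq> carrier G'" "map h w = v"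
    unfolding lists_image by blast
  then have "length w = n"
    using v by (auto simp: gen_tuple_def)
  note cover = pr_ball_subset_image_lift_append[OF hom T w(1) this, unfolded w(2)]
  show ?thesis
  proof (rule exp_nielsen_growthI_dominating[where c = 1, OF _ growth])
    show "gen_tuple G' (n + length T) (w @ T)"
      using gen_tuple_append[OF assms(2) w(1) T] \<open>length w = n\<close> by simp
    fix r
    have "card (pr_ball G n v r) \<le> card ((\<lambda>x. map h (take n x)) ` pr_ball G' (n + length T) (w @ T) r)"
      using finite_imageI[OF finite_pr_ball] cover by (rule card_mono)
    also have "\<dots> \<le> card (pr_ball G' (n + length T) (w @ T) r)"
      using finite_pr_ball by (rule card_image_le)
    finally show "card (pr_ball G n v r) \<le> 1 * card (pr_ball G' (n + length T) (w @ T) r)"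
      by simp
  qed
qed

lemma exp_nielsen_growth_image_finite_kernel:
  assumes "group G" and "group G'"
    and "h \<in> hom G G'" and "h ` carrier G = carrier G'" and "finite (kernel G G' h)"
    and "exp_nielsen_growth G"
  shows "exp_nielsen_growth G'"
proof -
  obtain n v \<alpha> R where v: "gen_tuple G n v"
    and growth: "\<alpha> > 1" "\<forall>r\<ge>R. \<alpha> ^ r \<le> real (card (pr_ball G n v r))"
    using assms(6) by (rule exp_nielsen_growthE)
  have hom: "group_hom G G' h"
    using assms(1,2,3) by (simp add: group_hom_def group_hom_axioms_def)
  let ?c = "(card (kernel G G' h) * n) ^ n"
  have v': "gen_tuple G' n (map h v)"
    using hom assms(4) v by (rule gen_tuple_map_surj)
  have fibre: "card {x \<in> pr_ball G n v r. map h x = y} \<le> ?c"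
    if "y \<in> pr_ball G' n (map h v) r" for y r
  proof -
    let ?F = "{x. set x \<subseteq> carrier G \<and> length x = n \<and> map h x = y}"
    have y: "length y = n"
      using gen_tuple_pr_ball[OF v' that] by (simp add: gen_tuple_def)
    have F: "finite ?F" "card ?F \<le> ?c"
      using card_hom_list_fibre_le[OF hom assms(5) y] by simp_all
    have "{x \<in> pr_ball G n v r. map h x = y} \<subseteq> ?F"
      using gen_tuple_pr_ball[OF v] by (auto simp: gen_tuple_def)
    then have "card {x \<in> pr_ball G n v r. map h x = y} \<le> card ?F"
      using F(1) by (intro card_mono)
    then show ?thesis
      using F(2) by (rule order.trans)
  qed
  have image: "map h ` pr_ball G n v r \<subseteq> pr_ball G' n (map h v) r" for r
    using pr_edge_map_surj[OF hom assms(4)] by (rule pr_ball_image_subset)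
  show ?thesis
  proof (rule exp_nielsen_growthI_dominating[OF v' growth])
    show "card (pr_ball G n v r) \<le> ?c * card (pr_ball G' n (map h v) r)" for r
      using finite_pr_ball image fibre by (rule card_le_mult_card_image)
  qed
qed

theorem proposition3p7:
  fixes G :: "('a, 'b) monoid_scheme" and G' :: "('c, 'd) monoid_scheme"
  assumes "group G" and "group G'"
    and "fin_gen G" and "fin_gen G'"
    and "(\<exists>h. h \<in> hom G G' \<and> inj_on h (carrier G))
       \<or> (\<exists>h. h \<in> hom G' G \<and> h ` carrier G' = carrier G)
       \<or> (\<exists>h. h \<in> hom G G' \<and> h ` carrier G = carrier G' \<and> finite (kernel G G' h))"
    and "exp_nielsen_growth G"
  shows "exp_nielsen_growth G'"
  using assms(5)
proof (elim disjE exE conjE)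
  fix h assume "h \<in> hom G G'" and "inj_on h (carrier G)"
  then show ?thesis
    by (rule exp_nielsen_growth_injective_hom[OF assms(1,2,4) _ _ assms(6)])
next
  fix h assume "h \<in> hom G' G" and "h ` carrier G' = carrier G"
  then show ?thesis
    by (rule exp_nielsen_growth_lift_surjective_hom[OF assms(1,2,4) _ _ assms(6)])
next
  fix h assume "h \<in> hom G G'" and "h ` carrier G = carrier G'" and "finite (kernel G G' h)"
  then show ?thesis
    by (rule exp_nielsen_growth_image_finite_kernel[OF assms(1,2) _ _ _ assms(6)])
qed

end
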